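(* Let $I=(T,((U_1,S_1),\dots,(U_k,S_k)))$ be an instance of \textsc{Generalized Graphic Inverse Voronoi in Trees} with $S_i\subseteq W_i$ for all $i$, let $xy\in E_1$ with $x\in W_1$ and $y\in U_1\setminus W_1$, and let $0<\varepsilon<\mathrm{res}(I)$. Let $I'$ be the instance obtained from $I$ by expanding the edge $xy$ from $E_1$ by $\varepsilon$. Suppose the answer to $I$ is ``yes''. If $\Sigma'$ is a solution to $I'$, then $\Sigma'$ is also a solution to $I$.
   Context: \textsc{Generalized Graphic Inverse Voronoi in Trees}: input is a tree $T$ with positive edge-lengths $\lambda$ and pairs $(U_1,S_1),\dots,(U_k,S_k)$ of subsets of $V(T)$ with $U_1,\dots,U_k$ covering $V(T)$. A solution is $s_1,\dots,s_k\in V(T)$ with $s_i\in S_i$ and $U_i=\mathrm{cell}_T(s_i,\{s_1,\dots,s_k\})$ for all $i$, where $\mathrm{cell}_T(s,\Sigma)=\{x\in V(T)\mid d_T(s,x)\le d_T(s',x)\ \forall s'\in\Sigma\}$ and $d_T$ is the shortest-path distance. For $i\in[k]$, $W_i=U_i\setminus\bigcup_{j\neq i}U_j$ and $E_i=\{uv\in E(T)\mid u\in W_i,\ v\in U_i\setminus W_i\}$. The resolution is $\mathrm{res}(I)=\min\bigl(\mathbb{R}_{>0}\cap\{d_T(s_i,u)-d_T(s_j,u)\mid u\in U_i\cap U_j,\ s_i\in S_i,\ s_j\in S_j,\ i,j\in[k]\}\bigr)$, with $\min\emptyset=+\infty$. Expansion of $xy\in E_1$ by $\varepsilon$: $T'$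 is obtained from $T$ by subdividing $xy$ with a new vertex $y'$, with $\lambda'(xy')=\lambda(xy)$, $\lambda'(yy')=\varepsilon$, other edges unchanged; $U_1'$ is the set of vertices of $U_1$ in the component of $T-y$ containing $x$, together with $y'$; $I'=(T',((U_1',S_1),(U_2,S_2),\dots,(U_k,S_k)))$. *)

theory Defs
  imports Main "HOL-Library.Extended_Real"
begin

definition walk :: "'a set set \<Rightarrow> 'a list \<Rightarrow> bool" where
  "walk E xs \<longleftrightarrow> xs \<noteq> [] \<and> (\<forall>i. Suc i < length xs \<longrightarrow> {xs ! i, xs ! Suc i} \<in> E)"

definition walk_len :: "('a set \<Rightarrow> real) \<Rightarrow> 'a list \<Rightarrow> real" where
  "walk_len lam xs = (\<Sum>i<length xs - 1. lam {xs ! i, xs ! Suc i})"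

definition is_cycle :: "'a set set \<Rightarrow> 'a list \<Rightarrow> bool" where
  "is_cycle E xs \<longleftrightarrow> walk E xs \<and> distinct xs \<and> length xs \<ge> 3 \<and> {last xs, hd xs} \<in> E"

definition is_tree :: "'a set \<Rightarrow> 'a set set \<Rightarrow> bool" where
  "is_tree V E \<longleftrightarrow> finite V \<and> V \<noteq> {} \<and>
     (\<forall>e\<in>E. \<exists>u v. e = {u, v} \<and> u \<noteq> v \<and> u \<in> V \<and> v \<in> V) \<and>
     (\<forall>u\<in>V. \<forall>v\<in>V. \<exists>xs. walk E xs \<and> hd xs = u \<and> last xs = v) \<and>
     (\<nexists>xs. is_cycle E xs)"

definition dist_T :: "'a set set \<Rightarrow> ('a set \<Rightarrow> real) \<Rightarrow> 'a \<Rightarrow> 'a \<Rightarrow> real" where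
  "dist_T E lam u v = Inf {walk_len lam xs | xs. walk E xs \<and> hd xs = u \<and> last xs = v}"

definition cell :: "'a set \<Rightarrow> 'a set set \<Rightarrow> ('a set \<Rightarrow> real) \<Rightarrow> 'a \<Rightarrow> 'a set \<Rightarrow> 'a set" where
  "cell V E lam s \<Sigma> = {x \<in> V. \<forall>s'\<in>\<Sigma>. dist_T E lam s x \<le> dist_T E lam s' x}"

definition gv_instance :: "'a set \<Rightarrow> 'a set set \<Rightarrow> ('a set \<Rightarrow> real) \<Rightarrow> nat \<Rightarrow>
    (nat \<Rightarrow> 'a set) \<Rightarrow> (nat \<Rightarrow> 'a set) \<Rightarrow> bool" where
  "gv_instance V E lam k U S \<longleftrightarrow> is_tree V E \<and> (\<forall>e\<in>E. lam e > 0) \<and>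
     (\<forall>i\<in>{1..k}. U i \<subseteq> V \<and> S i \<subseteq> V) \<and> (\<Union>i\<in>{1..k}. U i) = V"

definition is_solution :: "'a set \<Rightarrow> 'a set set \<Rightarrow> ('a set \<Rightarrow> real) \<Rightarrow> nat \<Rightarrow>
    (nat \<Rightarrow> 'a set) \<Rightarrow> (nat \<Rightarrow> 'a set) \<Rightarrow> (nat \<Rightarrow> 'a) \<Rightarrow> bool" where
  "is_solution V E lam k U S s \<longleftrightarrow>
     (\<forall>i\<in>{1..k}. s i \<in> S i \<and> U i = cell V E lam (s i) (s ` {1..k}))"

definition W_set :: "nat \<Rightarrow> (nat \<Rightarrow> 'a set) \<Rightarrow> nat \<Rightarrow> 'a set" where
  "W_set k U i = U i - (\<Union>j\<in>{1..k} - {i}. U j)"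

definition E_set :: "'a set set \<Rightarrow> nat \<Rightarrow> (nat \<Rightarrow> 'a set) \<Rightarrow> nat \<Rightarrow> 'a set set" where
  "E_set E k U i = {{u, v} | u v. {u, v} \<in> E \<and> u \<in> W_set k U i \<and> v \<in> U i - W_set k U i}"

definition res :: "'a set set \<Rightarrow> ('a set \<Rightarrow> real) \<Rightarrow> nat \<Rightarrow>
    (nat \<Rightarrow> 'a set) \<Rightarrow> (nat \<Rightarrow> 'a set) \<Rightarrow> ereal" where
  "res E lam k U S =
    (let D = {r. r > 0 \<and> (\<exists>i\<in>{1..k}. \<exists>j\<in>{1..k}. \<exists>u\<in>U i \<inter> U j. \<exists>si\<in>S i. \<exists>sj\<in>S j.
                   r = dist_T E lam si u - dist_T E lam sj u)}
     in if D = {} then \<infinity> else ereal (Min D))"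

definition comp_without :: "'a set set \<Rightarrow> 'a \<Rightarrow> 'a \<Rightarrow> 'a set" where
  "comp_without E y x = {v. \<exists>xs. walk E xs \<and> hd xs = x \<and> last xs = v \<and> y \<notin> set xs}"

definition exp_V :: "'a set \<Rightarrow> 'a \<Rightarrow> 'a set" where
  "exp_V V y' = insert y' V"

definition exp_E :: "'a set set \<Rightarrow> 'a \<Rightarrow> 'a \<Rightarrow> 'a \<Rightarrow> 'a set set" where
  "exp_E E x y y' = (E - {{x, y}}) \<union> {{x, y'}, {y, y'}}"

definition exp_lam :: "('a set \<Rightarrow> real) \<Rightarrow> 'a \<Rightarrow> 'a \<Rightarrow> 'a \<Rightarrow> real \<Rightarrow> 'a set \<Rightarrow> real" where
  "exp_lam lam x y y' eps e =
     (if e = {x, y'} then lam {x, y} else if e = {y, y'} then eps else lam e)"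

definition exp_U :: "'a set \<Rightarrow> 'a set set \<Rightarrow> (nat \<Rightarrow> 'a set) \<Rightarrow> 'a \<Rightarrow> 'a \<Rightarrow> 'a \<Rightarrow> nat \<Rightarrow> 'a set" where
  "exp_U V E U x y y' =
     U(1 := insert y' (U 1 \<inter> comp_without E y x \<inter> V))"

end

theory Submission
  imports Defs
begin

(* Let A and B be the sides of the edge xy in T containing x and y respectively.  Distances in T'
   between vertices of T exceed those in T by eps exactly across the edge, and s' 1 lies in A.
   Since y' belongs to the first cell of I' only, from every vertex of B the sites in A other than
   s' 1 are strictly farther than s' 1; together with the resolution bound eps < res(I), applied
   at y, this makes s' 1 exactly as close to y as the nearest site in T', and hence from every
   vertex of A the sites in B are strictly farther than s' 1.  So on A the cells of s' in T and T'
   coincide, and on B they coincide up to the eps penalty of s' 1.  That dropping this penalty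
   reproduces U 1 is propagated from y along the edges of B, using the given solution s of I: on a
   shortest path from s m to s' m (m <> 1) no vertex is as close to s 1 as to s m, because s' m
   lies in W m. *)

section \<open>Walks and shortest-path distance\<close>

lemma walk_singleton [simp]: "walk E [a]"
  by (simp add: walk_def)

lemma walk_nonempty: "walk E xs \<Longrightarrow> xs \<noteq> []"
  by (simp add: walk_def)

lemma walk_Cons_Cons: "walk E (a # b # xs) \<longleftrightarrow> {a, b} \<in> E \<and> walk E (b # xs)"
  unfolding walk_def by (auto simp: less_Suc_eq_0_disj)

lemma walk_len_singleton [simp]: "walk_len lam [a] = 0"
  by (simp add: walk_len_def)

lemma walk_len_Cons_Cons: "walk_len lam (a # b # xs) = lam {a, b} + walk_len lam (b # xs)"
  unfolding walk_len_def by (simp del: sum.lessThan_Suc add: sum.lessThan_Suc_shift)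

lemma walk_append_iff:
  assumes "u \<noteq> []" "v \<noteq> []"
  shows "walk E (u @ v) \<longleftrightarrow> walk E u \<and> walk E v \<and> {last u, hd v} \<in> E"
  using assms(1)
proof (induction u rule: list_nonempty_induct)
  case (single a)
  then show ?case using assms(2) by (cases v) (auto simp: walk_Cons_Cons)
next
  case (cons a u)
  then show ?case by (cases u) (auto simp: walk_Cons_Cons)
qed

lemma walk_len_append:
  assumes "u \<noteq> []" "v \<noteq> []"
  shows "walk_len lam (u @ v) = walk_len lam u + lam {last u, hd v} + walk_len lam v"
  using assms(1)
proof (induction u rule: list_nonempty_induct)
  case (single a)
  then show ?case using assms(2) by (cases v) (auto simp: walk_len_Cons_Cons)
next
  case (cons a u)
  then show ?case by (cases u) (auto simp: walk_len_Cons_Cons)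
qed

lemma walk_appendD: "walk E (u @ v) \<Longrightarrow> u \<noteq> [] \<Longrightarrow> walk E u"
  "walk E (u @ v) \<Longrightarrow> v \<noteq> [] \<Longrightarrow> walk E v"
  by (cases "v = []"; cases "u = []"; simp add: walk_append_iff)+

lemma walk_len_nonneg:
  assumes "\<forall>e\<in>E. 0 \<le> lam e" "walk E xs"
  shows "0 \<le> walk_len lam xs"
  unfolding walk_len_def
proof (rule sum_nonneg)
  fix i assume "i \<in> {..<length xs - 1}"
  then have "{xs ! i, xs ! Suc i} \<in> E" using assms(2) unfolding walk_def by auto
  then show "0 \<le> lam {xs ! i, xs ! Suc i}" using assms(1) by blast
qed

lemma walk_rev: "walk E (rev xs) \<longleftrightarrow> walk E xs"
proof (induction xs)
  case (Cons a xs)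
  show ?case
  proof (cases xs)
    case (Cons b xs')
    then have "rev xs \<noteq> []" "last (rev xs) = b" by simp_all
    then have "walk E (rev xs @ [a]) \<longleftrightarrow> walk E (rev xs) \<and> {b, a} \<in> E"
      using walk_append_iff[of "rev xs" "[a]" E] by simp
    then show ?thesis using Cons.IH Cons by (auto simp: walk_Cons_Cons insert_commute)
  qed simp
qed (simp add: walk_def)

lemma walk_len_rev: "walk_len lam (rev xs) = walk_len lam xs"
proof (induction xs)
  case (Cons a xs)
  show ?case
  proof (cases xs)
    case (Cons b xs')
    then have "rev xs \<noteq> []" "last (rev xs) = b" by simp_all
    then have "walk_len lam (rev xs @ [a]) = walk_len lam (rev xs) + lam {b, a}"
      using walk_len_append[of "rev xs" "[a]" lam] by simp
    then show ?thesis using Cons.IH Cons by (simp add: walk_len_Cons_Cons insert_commute)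
  qed simp
qed (simp add: walk_len_def)

lemma walk_glue:
  assumes "walk E p" "walk E q" "last p = hd q"
  shows "walk E (p @ tl q) \<and> walk_len lam (p @ tl q) = walk_len lam p + walk_len lam q
         \<and> hd (p @ tl q) = hd p \<and> last (p @ tl q) = last q"
proof (cases "tl q = []")
  case True
  then obtain a where "q = [a]" using walk_nonempty[OF assms(2)] by (cases q) auto
  then show ?thesis using assms by simp
next
  case False
  then obtain a b q' where q: "q = a # b # q'" by (cases q; cases "tl q") auto
  have "p \<noteq> []" using walk_nonempty[OF assms(1)] .
  then show ?thesis using assms q
    by (simp add: walk_append_iff walk_len_append walk_Cons_Cons walk_len_Cons_Cons)
qed

lemma walk_suffix_shorter:
  assumes "\<forall>e\<in>E. 0 \<le> lam e" "walk E (u @ v)" "v \<noteq> []"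
  shows "walk E v \<and> walk_len lam v \<le> walk_len lam (u @ v)"
proof (cases "u = []")
  case False
  then have "walk E u" "{last u, hd v} \<in> E" using assms walk_append_iff by blast+
  then show ?thesis using assms False
    by (simp add: walk_len_append walk_len_nonneg walk_append_iff)
qed (use assms in simp)

lemma walk_remove_cycles:
  assumes nonneg: "\<forall>e\<in>E. 0 \<le> lam e" and "walk E xs"
  shows "\<exists>ys. walk E ys \<and> distinct ys \<and> hd ys = hd xs \<and> last ys = last xs
              \<and> set ys \<subseteq> set xs \<and> walk_len lam ys \<le> walk_len lam xs"
  using assms(2)
proof (induction xs)
  case (Cons a rest)
  show ?case
  proof (cases rest)
    case Nil
    then show ?thesis by (intro exI[of _ "[a]"]) simp
  next
    case (Cons b rest')
    have ab: "{a, b} \<in> E" and "walk E rest" using Cons.prems Cons by (auto simp: walk_Cons_Cons)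
    then obtain r where r: "walk E r" "distinct r" "hd r = b" "last r = last rest" "set r \<subseteq> set rest"
      "walk_len lam r \<le> walk_len lam rest" using Cons.IH Cons by auto
    have len: "walk_len lam (a # rest) = lam {a, b} + walk_len lam rest" "0 \<le> lam {a, b}"
      using Cons nonneg ab by (auto simp: walk_len_Cons_Cons)
    show ?thesis
    proof (cases "a \<in> set r")
      case True
      then obtain u v where ruv: "r = u @ a # v" by (meson split_list)
      then have "walk E (a # v) \<and> walk_len lam (a # v) \<le> walk_len lam r"
        using walk_suffix_shorter[OF nonneg] r(1) by blast
      moreover have "last (a # v) = last r" using ruv by simp
      ultimately show ?thesis using r ruv len Cons by (intro exI[of _ "a # v"]) auto
    next
      case False
      obtain r' where "r = b # r'" using r(1,3) walk_nonempty by (cases r) auto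
      then show ?thesis using r ab False len Cons
        by (intro exI[of _ "a # r"]) (auto simp: walk_Cons_Cons walk_len_Cons_Cons)
    qed
  qed
qed (simp add: walk_def)

lemma dist_T_le:
  assumes nonneg: "\<forall>e\<in>E. 0 \<le> lam e" and "walk E xs" "hd xs = u" "last xs = v"
  shows "dist_T E lam u v \<le> walk_len lam xs"
  unfolding dist_T_def
proof (rule cInf_lower)
  show "bdd_below {walk_len lam xs |xs. walk E xs \<and> hd xs = u \<and> last xs = v}"
    by (rule bdd_belowI[of _ 0]) (use walk_len_nonneg[OF nonneg] in blast)
qed (use assms in blast)

lemma dist_T_greatest:
  assumes "walk E xs0" "hd xs0 = u" "last xs0 = v"
    and "\<And>xs. walk E xs \<Longrightarrow> hd xs = u \<Longrightarrow> last xs = v \<Longrightarrow> c \<le> walk_len lam xs"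
  shows "c \<le> dist_T E lam u v"
  unfolding dist_T_def by (rule cInf_greatest) (use assms in blast)+

lemma dist_T_nonneg:
  assumes "\<forall>e\<in>E. 0 \<le> lam e" "walk E xs" "hd xs = u" "last xs = v"
  shows "0 \<le> dist_T E lam u v"
  using dist_T_greatest[OF assms(2-4)] walk_len_nonneg[OF assms(1)] by blast

lemma dist_T_self:
  assumes "\<forall>e\<in>E. 0 \<le> lam e"
  shows "dist_T E lam u u = 0"
  using dist_T_le[OF assms, of "[u]"] dist_T_nonneg[OF assms, of "[u]"] by simp

lemma dist_T_sym: "dist_T E lam u v = dist_T E lam v u"
proof -
  define W where "W a b = {walk_len lam xs |xs. walk E xs \<and> hd xs = a \<and> last xs = b}" for a b
  have "W a b \<subseteq> W b a" for a b
  proof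
    fix r assume "r \<in> W a b"
    then obtain xs where xs: "r = walk_len lam xs" "walk E xs" "hd xs = a" "last xs = b"
      unfolding W_def by blast
    then have "walk E (rev xs) \<and> hd (rev xs) = b \<and> last (rev xs) = a \<and> walk_len lam (rev xs) = r"
      using walk_nonempty by (auto simp: walk_rev walk_len_rev hd_rev last_rev)
    then show "r \<in> W b a" unfolding W_def by blast
  qed
  then have "W u v = W v u" by blast
  then show ?thesis unfolding dist_T_def W_def by simp
qed

lemma dist_T_triangle:
  assumes nonneg: "\<forall>e\<in>E. 0 \<le> lam e"
    and "walk E p0" "hd p0 = u" "last p0 = v" and "walk E q0" "hd q0 = v" "last q0 = w"
  shows "dist_T E lam u w \<le> dist_T E lam u v + dist_T E lam v w"
proof -
  have glue: "dist_T E lam u w \<le> walk_len lam p + walk_len lam q"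
    if "walk E p" "hd p = u" "last p = v" "walk E q" "hd q = v" "last q = w" for p q
    using walk_glue[of E p q lam] dist_T_le[OF nonneg, of "p @ tl q" u w] that by simp
  have "dist_T E lam u w - walk_len lam q \<le> dist_T E lam u v"
    if "walk E q" "hd q = v" "last q = w" for q
    by (rule dist_T_greatest[OF assms(2-4)]) (use glue that in fastforce)
  then have "dist_T E lam u w - dist_T E lam u v \<le> dist_T E lam v w"
    by (intro dist_T_greatest[OF assms(5-7)]) fastforce
  then show ?thesis by simp
qed

lemma dist_T_edge:
  assumes "\<forall>e\<in>E. 0 \<le> lam e" "{a, b} \<in> E"
  shows "dist_T E lam a b \<le> lam {a, b}"
  using dist_T_le[OF assms(1), of "[a, b]"] assms(2) by (simp add: walk_Cons_Cons walk_len_Cons_Cons)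

section \<open>Vertex sets with a single exit edge\<close>

definition only_exit :: "'a set set \<Rightarrow> 'a set \<Rightarrow> 'a \<Rightarrow> 'a \<Rightarrow> bool" where
  "only_exit E C a b \<longleftrightarrow> (\<forall>u v. {u, v} \<in> E \<longrightarrow> u \<in> C \<longrightarrow> v \<notin> C \<longrightarrow> u = a \<and> v = b)"

lemma walk_leaves_through_exit:
  assumes "only_exit E C a b"
  shows "walk E xs \<Longrightarrow> hd xs \<in> C \<Longrightarrow> last xs \<notin> C \<Longrightarrow>
    \<exists>u v. xs = u @ v \<and> u \<noteq> [] \<and> v \<noteq> [] \<and> last u = a \<and> hd v = b"
proof (induction xs)
  case (Cons c rest)
  show ?case
  proof (cases rest)
    case (Cons c' rest')
    have "{c, c'} \<in> E" "walk E rest" using Cons.prems Cons by (auto simp: walk_Cons_Cons)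
    show ?thesis
    proof (cases "c' \<in> C")
      case False
      then have "c = a \<and> c' = b"
        using assms \<open>{c, c'} \<in> E\<close> Cons.prems unfolding only_exit_def by auto
      then show ?thesis using Cons by (intro exI[of _ "[c]"] exI[of _ rest]) auto
    next
      case True
      then obtain u v where "rest = u @ v" "u \<noteq> []" "v \<noteq> []" "last u = a" "hd v = b"
        using Cons.IH \<open>walk E rest\<close> Cons Cons.prems by auto
      then show ?thesis by (intro exI[of _ "c # u"] exI[of _ v]) auto
    qed
  qed (use Cons.prems in simp)
qed (simp add: walk_def)

text \<open>A walk that leaves C and comes back passes the exit vertex twice.\<close>
lemma distinct_walk_stays_inside:
  assumes exit: "only_exit E C a b" and "a \<in> C"
    and xs: "walk E xs" "distinct xs" "hd xs \<in> C" "last xs \<in> C"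
  shows "set xs \<subseteq> C"
proof
  fix z assume "z \<in> set xs"
  show "z \<in> C"
  proof (rule ccontr)
    assume z: "z \<notin> C"
    obtain u v where xs_split: "xs = u @ z # v" using \<open>z \<in> set xs\<close> by (meson split_list)
    have "u \<noteq> []" "v \<noteq> []" using xs_split xs(3,4) z by (cases u; auto)+
    have "walk E (u @ [z])" using walk_appendD(1)[of E "u @ [z]" v] xs(1) xs_split by simp
    moreover have "hd (u @ [z]) \<in> C" "last (u @ [z]) \<notin> C" using \<open>u \<noteq> []\<close> xs(3) z xs_split by auto
    ultimately obtain u1 v1 where u1: "u @ [z] = u1 @ v1" "u1 \<noteq> []" "last u1 = a"
      using walk_leaves_through_exit[OF exit] by blast
    then have "a \<in> set (u @ [z])" by (metis last_in_set Un_iff set_append)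
    then have "a \<in> set u" using \<open>a \<in> C\<close> z by auto
    have "walk E (z # v)" using walk_appendD(2)[of E u "z # v"] xs(1) xs_split by simp
    then have "walk E (rev (z # v))" by (simp only: walk_rev)
    moreover have "hd (rev (z # v)) \<in> C" "last (rev (z # v)) \<notin> C"
      using xs(4) xs_split \<open>v \<noteq> []\<close> z by (auto simp: hd_rev last_rev)
    ultimately obtain u2 v2 where "rev (z # v) = u2 @ v2" "u2 \<noteq> []" "last u2 = a"
      using walk_leaves_through_exit[OF exit] by blast
    then have "a \<in> set (rev (z # v))" by (metis last_in_set Un_iff set_append)
    then have "a \<in> set v" using \<open>a \<in> C\<close> z by auto
    then show False using \<open>a \<in> set u\<close> xs(2) xs_split by auto
  qed
qed

lemma walk_shortcut_inside:
  assumes nonneg: "\<forall>e\<in>E. 0 \<le> lam e" and exit: "only_exit E C a b" and "a \<in> C"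
    and "walk E xs" "hd xs \<in> C" "last xs \<in> C"
  shows "\<exists>ys. walk E ys \<and> hd ys = hd xs \<and> last ys = last xs \<and> set ys \<subseteq> C
              \<and> walk_len lam ys \<le> walk_len lam xs"
proof -
  obtain ys where ys: "walk E ys" "distinct ys" "hd ys = hd xs" "last ys = last xs"
      "walk_len lam ys \<le> walk_len lam xs"
    using walk_remove_cycles[OF nonneg \<open>walk E xs\<close>] by blast
  have "set ys \<subseteq> C" using distinct_walk_stays_inside[OF exit \<open>a \<in> C\<close> ys(1,2)] ys assms by simp
  then show ?thesis using ys by blast
qed

lemma walk_transfer:
  assumes "walk E1 xs" "set xs \<subseteq> C"
    and agree: "\<And>a b. a \<in> C \<Longrightarrow> b \<in> C \<Longrightarrow> {a, b} \<in> E1 \<Longrightarrow> {a, b} \<in> E2 \<and> lam2 {a, b} = lam1 {a, b}"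
  shows "walk E2 xs \<and> walk_len lam2 xs = walk_len lam1 xs"
proof -
  have step: "{xs ! i, xs ! Suc i} \<in> E2 \<and> lam2 {xs ! i, xs ! Suc i} = lam1 {xs ! i, xs ! Suc i}"
    if "Suc i < length xs" for i
  proof (rule agree)
    show "xs ! i \<in> C" "xs ! Suc i \<in> C" using that assms(2) by (auto dest: Suc_lessD intro: nth_mem)
    show "{xs ! i, xs ! Suc i} \<in> E1" using assms(1) that unfolding walk_def by blast
  qed
  have "walk E2 xs" using assms(1) step unfolding walk_def by blast
  moreover have "walk_len lam2 xs = walk_len lam1 xs" unfolding walk_len_def
    by (rule sum.cong) (use step in auto)
  ultimately show ?thesis by blast
qed

lemma dist_T_transfer_le:
  assumes nonneg1: "\<forall>e\<in>E1. 0 \<le> lam1 e" and nonneg2: "\<forall>e\<in>E2. 0 \<le> lam2 e"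
    and exit: "only_exit E1 C a b" "a \<in> C" and "u \<in> C" "v \<in> C"
    and agree: "\<And>p q. p \<in> C \<Longrightarrow> q \<in> C \<Longrightarrow> {p, q} \<in> E1 \<Longrightarrow> {p, q} \<in> E2 \<and> lam2 {p, q} = lam1 {p, q}"
    and "walk E1 xs0" "hd xs0 = u" "last xs0 = v"
  shows "dist_T E2 lam2 u v \<le> dist_T E1 lam1 u v"
proof (rule dist_T_greatest[OF assms(8-10)])
  fix xs assume xs: "walk E1 xs" "hd xs = u" "last xs = v"
  obtain ys where ys: "walk E1 ys" "hd ys = u" "last ys = v" "set ys \<subseteq> C"
      "walk_len lam1 ys \<le> walk_len lam1 xs"
    using walk_shortcut_inside[OF nonneg1 exit xs(1)] xs assms by auto
  then show "dist_T E2 lam2 u v \<le> walk_len lam1 xs"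
    using walk_transfer[OF ys(1,4) agree] dist_T_le[OF nonneg2, of ys u v] by simp
qed

text \<open>Shortest walks between vertices of C stay inside C, so only the edges inside C matter.\<close>
lemma dist_T_eq_inside:
  assumes nonneg1: "\<forall>e\<in>E1. 0 \<le> lam1 e" and nonneg2: "\<forall>e\<in>E2. 0 \<le> lam2 e"
    and exit1: "only_exit E1 C a b1" and exit2: "only_exit E2 C a b2" and "a \<in> C"
    and "u \<in> C" "v \<in> C"
    and agree: "\<And>p q. p \<in> C \<Longrightarrow> q \<in> C \<Longrightarrow> ({p, q} \<in> E1 \<longleftrightarrow> {p, q} \<in> E2) \<and> lam1 {p, q} = lam2 {p, q}"
    and "walk E1 xs" "hd xs = u" "last xs = v"
  shows "dist_T E2 lam2 u v = dist_T E1 lam1 u v"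
proof -
  obtain ys where ys: "walk E1 ys" "hd ys = u" "last ys = v" "set ys \<subseteq> C"
    using walk_shortcut_inside[OF nonneg1 exit1 \<open>a \<in> C\<close> \<open>walk E1 xs\<close>] assms by auto
  have agree12: "{p, q} \<in> E2 \<and> lam2 {p, q} = lam1 {p, q}"
    if "p \<in> C" "q \<in> C" "{p, q} \<in> E1" for p q using agree that by simp
  have agree21: "{p, q} \<in> E1 \<and> lam1 {p, q} = lam2 {p, q}"
    if "p \<in> C" "q \<in> C" "{p, q} \<in> E2" for p q using agree that by simp
  have "walk E2 ys" using walk_transfer[OF ys(1,4) agree12] by blast
  show ?thesis
  proof (rule antisym)
    show "dist_T E2 lam2 u v \<le> dist_T E1 lam1 u v"
      using dist_T_transfer_le[OF nonneg1 nonneg2 exit1 \<open>a \<in> C\<close> \<open>u \<in> C\<close> \<open>v \<in> C\<close> agree12 ys(1-3)] .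
    show "dist_T E1 lam1 u v \<le> dist_T E2 lam2 u v"
      using dist_T_transfer_le[OF nonneg2 nonneg1 exit2 \<open>a \<in> C\<close> \<open>u \<in> C\<close> \<open>v \<in> C\<close> agree21
          \<open>walk E2 ys\<close> ys(2,3)] .
  qed
qed

lemma dist_T_through_exit:
  assumes nonneg: "\<forall>e\<in>E. 0 \<le> lam e" and exit: "only_exit E C a0 b0" "{a0, b0} \<in> E"
    and "a \<in> C" "b \<notin> C"
    and p: "walk E p" "hd p = a" "last p = a0" and q: "walk E q" "hd q = b0" "last q = b"
  shows "dist_T E lam a b = dist_T E lam a a0 + lam {a0, b0} + dist_T E lam b0 b"
proof (rule antisym)
  have "walk E (a0 # q)" using q exit(2) walk_nonempty[OF q(1)] by (cases q) (auto simp: walk_Cons_Cons)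
  then have "dist_T E lam a b \<le> dist_T E lam a a0 + dist_T E lam a0 b"
    using dist_T_triangle[OF nonneg p, of "a0 # q"] q walk_nonempty[OF q(1)] by simp
  also have "dist_T E lam a0 b \<le> dist_T E lam a0 b0 + dist_T E lam b0 b"
    using dist_T_triangle[OF nonneg _ _ _ q, of "[a0, b0]"] exit(2) by (simp add: walk_Cons_Cons)
  also have "dist_T E lam a0 b0 \<le> lam {a0, b0}" using dist_T_edge[OF nonneg exit(2)] .
  finally show "dist_T E lam a b \<le> dist_T E lam a a0 + lam {a0, b0} + dist_T E lam b0 b" by simp
next
  have pq: "walk E (p @ q)" "hd (p @ q) = a" "last (p @ q) = b"
    using p q exit(2) walk_nonempty[OF p(1)] walk_nonempty[OF q(1)] by (auto simp: walk_append_iff)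
  show "dist_T E lam a a0 + lam {a0, b0} + dist_T E lam b0 b \<le> dist_T E lam a b"
  proof (rule dist_T_greatest[OF pq])
    fix xs assume xs: "walk E xs" "hd xs = a" "last xs = b"
    then obtain u v where uv: "xs = u @ v" "u \<noteq> []" "v \<noteq> []" "last u = a0" "hd v = b0"
      using walk_leaves_through_exit[OF exit(1)] assms by blast
    then have "walk E u" "walk E v" "walk_len lam xs = walk_len lam u + lam {a0, b0} + walk_len lam v"
      using xs(1) walk_appendD walk_len_append by auto
    moreover have "hd u = a" "last v = b" using uv xs by auto
    ultimately show "dist_T E lam a a0 + lam {a0, b0} + dist_T E lam b0 b \<le> walk_len lam xs"
      using dist_T_le[OF nonneg \<open>walk E u\<close> _ uv(4)] dist_T_le[OF nonneg \<open>walk E v\<close> uv(5)]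
      by fastforce
  qed
qed

section \<open>Distances in a weighted tree\<close>

locale weighted_tree =
  fixes V :: "'a set" and E :: "'a set set" and lam :: "'a set \<Rightarrow> real"
  assumes tree: "is_tree V E" and lam_nonneg: "\<forall>e\<in>E. 0 \<le> lam e"
begin

abbreviation "d \<equiv> dist_T E lam"

lemma edge_vertices:
  assumes "{a, b} \<in> E"
  shows "a \<in> V" "b \<in> V" "a \<noteq> b"
proof -
  obtain u v where "{a, b} = {u, v}" "u \<noteq> v" "u \<in> V" "v \<in> V"
    using assms tree unfolding is_tree_def by blast
  then show "a \<in> V" "b \<in> V" "a \<noteq> b" by (auto simp: doubleton_eq_iff)
qed

lemma connected:
  assumes "u \<in> V" "v \<in> V"
  obtains xs where "walk E xs" "hd xs = u" "last xs = v"
  using assms tree unfolding is_tree_def by blast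

lemma walk_subset_V: "walk E xs \<Longrightarrow> hd xs \<in> V \<Longrightarrow> set xs \<subseteq> V"
proof (induction xs)
  case (Cons a rest)
  then show ?case
    by (cases rest) (auto simp: walk_Cons_Cons dest: edge_vertices(2))
qed simp

lemma dist_nonneg: "u \<in> V \<Longrightarrow> v \<in> V \<Longrightarrow> 0 \<le> d u v"
  by (metis connected dist_T_nonneg lam_nonneg)

lemma dist_self: "d u u = 0"
  using dist_T_self[OF lam_nonneg] .

lemma dist_triangle:
  assumes "u \<in> V" "v \<in> V" "w \<in> V"
  shows "d u w \<le> d u v + d v w"
proof -
  obtain p q where "walk E p" "hd p = u" "last p = v" "walk E q" "hd q = v" "last q = w"
    using connected assms by metis
  then show ?thesis using dist_T_triangle[OF lam_nonneg] by blast
qed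

lemma dist_edge: "{a, b} \<in> E \<Longrightarrow> d a b \<le> lam {a, b}"
  using dist_T_edge[OF lam_nonneg] .

lemma comp_without_basics:
  assumes "{p, q} \<in> E"
  shows "p \<in> comp_without E q p" "q \<notin> comp_without E q p" "comp_without E q p \<subseteq> V"
proof -
  show "p \<in> comp_without E q p"
    unfolding comp_without_def using edge_vertices[OF assms] by (intro CollectI exI[of _ "[p]"]) simp
  show "q \<notin> comp_without E q p"
    unfolding comp_without_def using walk_nonempty last_in_set by fastforce
  show "comp_without E q p \<subseteq> V"
    unfolding comp_without_def
    using walk_subset_V edge_vertices(1)[OF assms] walk_nonempty last_in_set by blast
qed

text \<open>An edge ab leaving the component ends in q by maximality; if a were not p, a path from p
  to a closed up through q would be a cycle.\<close>
lemma only_exit_comp_without: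
  assumes pq: "{p, q} \<in> E"
  shows "only_exit E (comp_without E q p) p q"
  unfolding only_exit_def
proof (intro allI impI)
  fix a b assume ab: "{a, b} \<in> E" and a: "a \<in> comp_without E q p" and b: "b \<notin> comp_without E q p"
  obtain xs where xs: "walk E xs" "hd xs = p" "last xs = a" "q \<notin> set xs"
    using a unfolding comp_without_def by blast
  have "b = q"
  proof (rule ccontr)
    assume "b \<noteq> q"
    then have "walk E (xs @ [b]) \<and> hd (xs @ [b]) = p \<and> last (xs @ [b]) = b \<and> q \<notin> set (xs @ [b])"
      using xs ab walk_nonempty[OF xs(1)] by (simp add: walk_append_iff)
    then show False using b unfolding comp_without_def by blast
  qed
  moreover have "a = p"
  proof (rule ccontr)
    assume "a \<noteq> p"
    obtain ys where ys: "walk E ys" "distinct ys" "hd ys = p" "last ys = a" "set ys \<subseteq> set xs"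
      using walk_remove_cycles[OF lam_nonneg xs(1)] xs by blast
    have "ys \<noteq> []" using walk_nonempty[OF ys(1)] .
    then have "length ys \<ge> 2" using ys \<open>a \<noteq> p\<close> by (cases ys) (auto simp: Suc_le_eq)
    have "is_cycle E (ys @ [q])"
      unfolding is_cycle_def using ys xs \<open>ys \<noteq> []\<close> \<open>length ys \<ge> 2\<close> ab pq \<open>b = q\<close>
      by (auto simp: walk_append_iff insert_commute)
    then show False using tree unfolding is_tree_def by blast
  qed
  ultimately show "a = p \<and> b = q" by blast
qed

lemma only_exit_complement:
  assumes "only_exit E C a b"
  shows "only_exit E (V - C) b a"
  using assms edge_vertices unfolding only_exit_def by (metis Diff_iff insert_commute)

lemma dist_across_edge:
  assumes pq: "{p, q} \<in> E" and a: "a \<in> comp_without E q p" and b: "b \<in> V" "b \<notin> comp_without E q p"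
  shows "d a b = d a p + lam {p, q} + d q b"
proof -
  have "a \<in> V" "p \<in> V" "q \<in> V" using comp_without_basics[OF pq] edge_vertices[OF pq] a by auto
  then obtain xs ys where "walk E xs" "hd xs = a" "last xs = p" "walk E ys" "hd ys = q" "last ys = b"
    using connected b by metis
  then show ?thesis using dist_T_through_exit[OF lam_nonneg only_exit_comp_without[OF pq] pq a b(2)]
    by blast
qed

lemma dist_edge_near:
  "{p, q} \<in> E \<Longrightarrow> a \<in> comp_without E q p \<Longrightarrow> d a q = d a p + lam {p, q}"
  using dist_across_edge[of p q a q] comp_without_basics edge_vertices dist_self by simp

lemma dist_edge_far:
  assumes "{p, q} \<in> E" "a \<in> V" "a \<notin> comp_without E q p"
  shows "d a p = d a q + lam {p, q}"
proof -
  have "d p a = d p p + lam {p, q} + d q a"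
    using dist_across_edge[OF assms(1) comp_without_basics(1)[OF assms(1)] assms(2,3)] .
  then show ?thesis using dist_self dist_T_sym[of E lam p a] dist_T_sym[of E lam q a] by simp
qed

end

section \<open>Subdividing an edge\<close>

locale tree_edge_expansion = weighted_tree +
  fixes x y y' :: 'a and eps :: real
  assumes edge_xy: "{x, y} \<in> E" and y'_fresh: "y' \<notin> V" and eps_nonneg: "0 \<le> eps"
begin

abbreviation "A \<equiv> comp_without E y x"
abbreviation "B \<equiv> V - A"
abbreviation "E' \<equiv> exp_E E x y y'"
abbreviation "lam' \<equiv> exp_lam lam x y y' eps"
abbreviation "d' \<equiv> dist_T E' lam'"

lemma x_in_A: "x \<in> A" and y_notin_A: "y \<notin> A" and A_subset_V: "A \<subseteq> V"
  using comp_without_basics[OF edge_xy] by blast+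

lemma x_in_V: "x \<in> V" and y_in_V: "y \<in> V"
  using edge_vertices[OF edge_xy] by blast+

lemma exp_E_iff: "e \<in> E' \<longleftrightarrow> (e \<in> E \<and> e \<noteq> {x, y}) \<or> e = {x, y'} \<or> e = {y, y'}"
  unfolding exp_E_def by blast

lemma lam'_x_y': "lam' {x, y'} = lam {x, y}"
  unfolding exp_lam_def by simp

lemma lam'_y_y': "lam' {y, y'} = eps"
  using edge_vertices[OF edge_xy] unfolding exp_lam_def by (auto simp: doubleton_eq_iff)

lemma lam'_nonneg: "\<forall>e\<in>E'. 0 \<le> lam' e"
  using lam_nonneg eps_nonneg edge_xy unfolding exp_E_def exp_lam_def by auto

lemma expansion_agrees:
  assumes "a \<in> V" "b \<in> V" "a \<in> A \<longleftrightarrow> b \<in> A"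
  shows "({a, b} \<in> E \<longleftrightarrow> {a, b} \<in> E') \<and> lam {a, b} = lam' {a, b}"
proof -
  have "{a, b} \<noteq> {x, y'}" "{a, b} \<noteq> {y, y'}" "{a, b} \<noteq> {x, y}"
    using assms y'_fresh x_in_A y_notin_A by (auto simp: doubleton_eq_iff)
  then show ?thesis unfolding exp_E_def exp_lam_def by auto
qed

lemma y'_notin_A: "y' \<notin> A"
  using A_subset_V y'_fresh by blast

lemma only_exit'_A: "only_exit E' A x y'"
  unfolding only_exit_def
proof (intro allI impI)
  fix u v assume uv: "{u, v} \<in> E'" "u \<in> A" "v \<notin> A"
  then consider "{u, v} \<in> E" "{u, v} \<noteq> {x, y}" | "{u, v} = {x, y'}" | "{u, v} = {y, y'}"
    using exp_E_iff by blast
  then show "u = x \<and> v = y'"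
  proof cases
    case 1
    then show ?thesis using only_exit_comp_without[OF edge_xy] uv unfolding only_exit_def by blast
  qed (use uv y_notin_A y'_notin_A in \<open>auto simp: doubleton_eq_iff\<close>)
qed

lemma only_exit'_B: "only_exit E' (B) y y'"
  unfolding only_exit_def
proof (intro allI impI)
  fix u v assume uv: "{u, v} \<in> E'" "u \<in> B" "v \<notin> B"
  then consider "{u, v} \<in> E" "{u, v} \<noteq> {x, y}" | "{u, v} = {x, y'}" | "{u, v} = {y, y'}"
    using exp_E_iff by blast
  then show "u = y \<and> v = y'"
  proof cases
    case 1
    then have "u = y \<and> v = x"
      using only_exit_complement[OF only_exit_comp_without[OF edge_xy]] uv unfolding only_exit_def by blast
    then show ?thesis using 1 by (simp add: insert_commute)
  qed (use uv x_in_A y'_fresh in \<open>auto simp: doubleton_eq_iff\<close>)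
qed

lemma walk'_same_side:
  assumes "a \<in> V" "b \<in> V" "a \<in> A \<longleftrightarrow> b \<in> A"
  shows "\<exists>xs. walk E' xs \<and> hd xs = a \<and> last xs = b"
proof -
  define C where "C = (if a \<in> A then A else B)"
  have "a \<in> C" "b \<in> C" "C \<subseteq> V" using assms A_subset_V unfolding C_def by auto
  obtain c c' where exit: "only_exit E C c c'" "c \<in> C"
  proof (cases "a \<in> A")
    case True
    then show ?thesis using that only_exit_comp_without[OF edge_xy] x_in_A unfolding C_def by simp
  next
    case False
    then show ?thesis
      using that only_exit_complement[OF only_exit_comp_without[OF edge_xy]] y_in_V y_notin_A
      unfolding C_def by simp
  qed
  obtain xs where xs: "walk E xs" "hd xs = a" "last xs = b" using connected assms by blast
  have "\<exists>ys. walk E ys \<and> hd ys = a \<and> last ys = b \<and> set ys \<subseteq> C"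
    using walk_shortcut_inside[OF lam_nonneg exit xs(1)] xs \<open>a \<in> C\<close> \<open>b \<in> C\<close> by auto
  then obtain ys where ys: "walk E ys" "hd ys = a" "last ys = b" "set ys \<subseteq> C" by blast
  have "{p, q} \<in> E' \<and> lam' {p, q} = lam {p, q}" if "p \<in> C" "q \<in> C" "{p, q} \<in> E" for p q
  proof -
    have "p \<in> V" "q \<in> V" "p \<in> A \<longleftrightarrow> q \<in> A"
      using that \<open>C \<subseteq> V\<close> unfolding C_def by (auto split: if_splits)
    then show ?thesis using expansion_agrees that(3) by simp
  qed
  from walk_transfer[OF ys(1,4) this] have "walk E' ys" by blast
  then show ?thesis using ys(2,3) by blast
qed

lemma dist'_same_side:
  assumes "a \<in> V" "b \<in> V" "a \<in> A \<longleftrightarrow> b \<in> A"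
  shows "d' a b = d a b"
proof -
  obtain xs where xs: "walk E xs" "hd xs = a" "last xs = b" using connected assms(1,2) by blast
  have side: "d' a b = d a b"
    if exits: "only_exit E C c c1" "only_exit E' C c c2" "c \<in> C" and C: "C = A \<or> C = B"
      and ab: "a \<in> C" "b \<in> C"
    for C c c1 c2
  proof -
    have "({p, q} \<in> E \<longleftrightarrow> {p, q} \<in> E') \<and> lam {p, q} = lam' {p, q}" if "p \<in> C" "q \<in> C" for p q
      by (rule expansion_agrees) (use that C A_subset_V in auto)
    from dist_T_eq_inside[OF lam_nonneg lam'_nonneg exits ab this xs] show ?thesis .
  qed
  show ?thesis
  proof (cases "a \<in> A")
    case True
    then have "b \<in> A" using assms(3) by simp
    with True show ?thesis
      using side[OF only_exit_comp_without[OF edge_xy] only_exit'_A x_in_A] by simp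
  next
    case False
    then have "a \<in> B" "b \<in> B" "y \<in> B" using assms y_in_V y_notin_A by auto
    then show ?thesis
      using side[OF only_exit_complement[OF only_exit_comp_without[OF edge_xy]] only_exit'_B] by simp
  qed
qed

lemma edges'_y': "{x, y'} \<in> E'" "{y, y'} \<in> E'"
  by (simp_all add: exp_E_iff)

lemma dist'_y'_near:
  assumes "a \<in> A"
  shows "d' a y' = d a y"
proof -
  have "a \<in> V" "a \<in> A \<longleftrightarrow> x \<in> A" using assms A_subset_V x_in_A by auto
  then obtain p where "walk E' p" "hd p = a" "last p = x"
    using walk'_same_side[OF _ x_in_V] by auto
  then have "d' a y' = d' a x + lam' {x, y'} + d' y' y'"
    using dist_T_through_exit[OF lam'_nonneg only_exit'_A edges'_y'(1) assms y'_notin_A, of p "[y']"]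
    by simp
  also have "\<dots> = d a x + lam {x, y}"
    using dist'_same_side[OF \<open>a \<in> V\<close> x_in_V] \<open>a \<in> A \<longleftrightarrow> x \<in> A\<close> lam'_x_y'
      dist_T_self[OF lam'_nonneg] by simp
  also have "\<dots> = d a y"
    using dist_across_edge[OF edge_xy assms y_in_V y_notin_A] dist_self by simp
  finally show ?thesis .
qed

lemma dist'_y'_far:
  assumes "b \<in> B"
  shows "d' b y' = d b y + eps"
proof -
  have "b \<in> V" "y' \<notin> B" "b \<in> A \<longleftrightarrow> y \<in> A" using assms y'_fresh y_notin_A by auto
  then obtain p where "walk E' p" "hd p = b" "last p = y"
    using walk'_same_side[OF _ y_in_V] by auto
  then have "d' b y' = d' b y + lam' {y, y'} + d' y' y'"
    using dist_T_through_exit[OF lam'_nonneg only_exit'_B edges'_y'(2) assms \<open>y' \<notin> B\<close>, of p "[y']"]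
    by simp
  then show ?thesis
    using dist'_same_side[OF \<open>b \<in> V\<close> y_in_V] \<open>b \<in> A \<longleftrightarrow> y \<in> A\<close> lam'_y_y'
      dist_T_self[OF lam'_nonneg] by simp
qed

lemma dist'_across:
  assumes a: "a \<in> A" and b: "b \<in> B"
  shows "d' a b = d a b + eps"
proof -
  have "a \<in> V" "a \<in> A \<longleftrightarrow> x \<in> A" using a A_subset_V x_in_A by auto
  then obtain p where p: "walk E' p" "hd p = a" "last p = x"
    using walk'_same_side[OF _ x_in_V] by auto
  have "b \<in> V" "y \<in> A \<longleftrightarrow> b \<in> A" using b y_notin_A by auto
  then obtain q where q: "walk E' q" "hd q = y" "last q = b"
    using walk'_same_side[OF y_in_V] by auto
  obtain q0 q' where "q = q0 # q'" using walk_nonempty[OF q(1)] by (cases q) auto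
  then have q': "walk E' (y' # q)" "hd (y' # q) = y'" "last (y' # q) = b"
    using q edges'_y'(2) by (simp_all add: walk_Cons_Cons insert_commute)
  have "d' a b = d' a x + lam' {x, y'} + d' y' b"
    using dist_T_through_exit[OF lam'_nonneg only_exit'_A edges'_y'(1) a _ p q'] b by simp
  moreover have "d' y' b = d b y + eps"
    using dist'_y'_far[OF b] dist_T_sym[of E' lam' b y'] by simp
  moreover have "d' a x = d a x"
    using dist'_same_side[OF \<open>a \<in> V\<close> x_in_V] \<open>a \<in> A \<longleftrightarrow> x \<in> A\<close> by simp
  moreover have "d a b = d a x + lam {x, y} + d y b"
    using dist_across_edge[OF edge_xy a] b by simp
  ultimately show ?thesis using lam'_x_y' dist_T_sym[of E lam b y] by simp
qed

lemma dist_across_via_y: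
  assumes "a \<in> A" "b \<in> B"
  shows "d a b = d a y + d y b"
  using dist_across_edge[OF edge_xy assms(1)] dist_edge_near[OF edge_xy assms(1)] assms(2) by simp

lemma dist'_vertices:
  assumes "a \<in> V" "b \<in> V"
  shows "d' a b = d a b + (if a \<in> A \<longleftrightarrow> b \<in> A then 0 else eps)"
proof (cases "a \<in> A \<longleftrightarrow> b \<in> A")
  case False
  then consider "a \<in> A" "b \<notin> A" | "b \<in> A" "a \<notin> A" by blast
  then show ?thesis
  proof cases
    case 2
    then show ?thesis
      using dist'_across[of b a] assms dist_T_sym[of E' lam' a b] dist_T_sym[of E lam a b] by simp
  qed (use dist'_across assms in simp)
qed (use dist'_same_side assms in simp)

lemma dist'_new_vertex:
  assumes "a \<in> V"
  shows "d' a y' = d a y + (if a \<in> A then 0 else eps)"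
  using dist'_y'_near dist'_y'_far assms by simp

end

section \<open>Cells before and after the expansion\<close>

lemma res_le_gap:
  assumes "finite V" "\<forall>i\<in>{1..k}. U i \<subseteq> V \<and> S i \<subseteq> V"
    and "i \<in> {1..k}" "j \<in> {1..k}" "u \<in> U i" "u \<in> U j" "a \<in> S i" "b \<in> S j"
    and "0 < dist_T E lam a u - dist_T E lam b u"
  shows "res E lam k U S \<le> ereal (dist_T E lam a u - dist_T E lam b u)"
proof -
  define D where "D = {r. r > 0 \<and> (\<exists>i\<in>{1..k}. \<exists>j\<in>{1..k}. \<exists>u\<in>U i \<inter> U j. \<exists>si\<in>S i. \<exists>sj\<in>S j.
                   r = dist_T E lam si u - dist_T E lam sj u)}"
  have gap: "dist_T E lam a u - dist_T E lam b u \<in> D" unfolding D_def using assms(3-9) by blast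
  have "D \<subseteq> (\<lambda>(a, b, u). dist_T E lam a u - dist_T E lam b u) ` (V \<times> V \<times> V)"
    unfolding D_def using assms(2) by (fastforce simp: image_iff)
  then have "finite D" using assms(1) by (meson finite_SigmaI finite_imageI finite_subset)
  then have "Min D \<le> dist_T E lam a u - dist_T E lam b u" using gap by simp
  moreover have "res E lam k U S = ereal (Min D)" unfolding res_def D_def[symmetric] Let_def using gap by auto
  ultimately show ?thesis by simp
qed

locale expanded_instance =
  fixes V :: "'a set" and E :: "'a set set" and lam :: "'a set \<Rightarrow> real"
    and k :: nat and U S :: "nat \<Rightarrow> 'a set" and x y y' :: 'a and eps :: real
    and s s' :: "nat \<Rightarrow> 'a"
  assumes inst: "gv_instance V E lam k U S"
    and k1: "1 \<le> k"
    and SW: "\<forall>i\<in>{1..k}. S i \<subseteq> W_set k U i"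
    and xyE: "{x, y} \<in> E_set E k U 1"
    and xW: "x \<in> W_set k U 1"
    and yU: "y \<in> U 1 - W_set k U 1"
    and eps_pos: "0 < eps"
    and eps_res: "ereal eps < res E lam k U S"
    and y'_new: "y' \<notin> V"
    and sol: "is_solution V E lam k U S s"
    and sol': "is_solution (exp_V V y') (exp_E E x y y') (exp_lam lam x y y' eps) k
                 (exp_U V E U x y y') S s'"

lemma (in expanded_instance) edge_xy: "{x, y} \<in> E"
  using xyE unfolding E_set_def by auto

sublocale expanded_instance \<subseteq> tree_edge_expansion V E lam x y y' eps
  using inst edge_xy y'_new eps_pos unfolding gv_instance_def
  by unfold_locales auto

context expanded_instance
begin

abbreviation "K \<equiv> {1..k}"
abbreviation "U' \<equiv> exp_U V E U x y y'"

abbreviation "f m v \<equiv> d (s' m) v"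
abbreviation "g m v \<equiv> d (s m) v"
abbreviation "h m v \<equiv> d' (s' m) v"

lemma lam_pos: "e \<in> E \<Longrightarrow> 0 < lam e"
  using inst unfolding gv_instance_def by blast

lemma U_subset_V: "i \<in> K \<Longrightarrow> U i \<subseteq> V" and S_subset_V: "i \<in> K \<Longrightarrow> S i \<subseteq> V"
  using inst unfolding gv_instance_def by blast+

lemma U_cover: "v \<in> V \<Longrightarrow> \<exists>i\<in>K. v \<in> U i"
  using inst unfolding gv_instance_def by blast

lemma one_in_K: "1 \<in> K"
  using k1 by simp

lemma mem_U: "i \<in> K \<Longrightarrow> v \<in> U i \<longleftrightarrow> v \<in> V \<and> (\<forall>m\<in>K. g i v \<le> g m v)"
  using sol unfolding is_solution_def cell_def by auto

lemma mem_U': "i \<in> K \<Longrightarrow> v \<in> U' i \<longleftrightarrow> v \<in> insert y' V \<and> (\<forall>m\<in>K. h i v \<le> h m v)"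
  using sol' unfolding is_solution_def cell_def exp_V_def by auto

lemma s_in_S: "i \<in> K \<Longrightarrow> s i \<in> S i" and s'_in_S: "i \<in> K \<Longrightarrow> s' i \<in> S i"
  using sol sol' unfolding is_solution_def by blast+

lemma s_in_V: "i \<in> K \<Longrightarrow> s i \<in> V" and s'_in_V: "i \<in> K \<Longrightarrow> s' i \<in> V"
  using s_in_S s'_in_S S_subset_V by blast+

lemma s'_in_W: "i \<in> K \<Longrightarrow> s' i \<in> W_set k U i"
  using s'_in_S SW by blast

lemma W_subset_U: "W_set k U i \<subseteq> U i"
  unfolding W_set_def by blast

lemma W_notin_other: "j \<in> K \<Longrightarrow> j \<noteq> i \<Longrightarrow> v \<in> W_set k U i \<Longrightarrow> v \<notin> U j"
  unfolding W_set_def by blast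

lemma U'_first: "U' 1 = insert y' (U 1 \<inter> A)"
  using A_subset_V unfolding exp_U_def by auto

lemma U'_other: "i \<noteq> 1 \<Longrightarrow> U' i = U i"
  unfolding exp_U_def by simp

lemma x_in_U1: "x \<in> U 1" and y_in_U1: "y \<in> U 1"
  using xW yU W_subset_U by auto

lemma dist_eq_if_gap_le_eps:
  assumes "i \<in> K" "j \<in> K" "u \<in> U i" "u \<in> U j" "a \<in> S i" "b \<in> S j"
    and "d a u - d b u \<le> eps" "d b u - d a u \<le> eps"
  shows "d a u = d b u"
proof (rule ccontr)
  have fin: "finite V" and sub: "\<forall>i\<in>K. U i \<subseteq> V \<and> S i \<subseteq> V"
    using inst unfolding gv_instance_def is_tree_def by blast+
  assume "d a u \<noteq> d b u"
  then consider "0 < d a u - d b u" | "0 < d b u - d a u" by linarith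
  then show False
  proof cases
    case 1
    then have "res E lam k U S \<le> ereal (d a u - d b u)"
      using res_le_gap[OF fin sub assms(1-6), where E = E and lam = lam] by blast
    then show False using eps_res assms(7) by (meson ereal_less_eq(3) le_less_trans not_le)
  next
    case 2
    then have "res E lam k U S \<le> ereal (d b u - d a u)"
      using res_le_gap[OF fin sub assms(2,1,4,3,6,5), where E = E and lam = lam] by blast
    then show False using eps_res assms(8) by (meson ereal_less_eq(3) le_less_trans not_le)
  qed
qed

lemma h_vertex: "m \<in> K \<Longrightarrow> v \<in> V \<Longrightarrow> h m v = f m v + (if s' m \<in> A \<longleftrightarrow> v \<in> A then 0 else eps)"
  using dist'_vertices s'_in_V by blast

lemma h_new_vertex: "m \<in> K \<Longrightarrow> h m y' = f m y + (if s' m \<in> A then 0 else eps)"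
  using dist'_new_vertex s'_in_V by blast

lemma s'_first_in_A: "s' 1 \<in> A"
proof -
  have "s' 1 \<in> V" using s'_in_V one_in_K .
  have "h 1 (s' 1) \<le> h m (s' 1)" if "m \<in> K" for m
  proof -
    have "h 1 (s' 1) = 0" using dist_T_self[OF lam'_nonneg] .
    also have "0 \<le> f m (s' 1)" using dist_nonneg s'_in_V that \<open>s' 1 \<in> V\<close> by blast
    also have "\<dots> \<le> h m (s' 1)" using h_vertex[OF that \<open>s' 1 \<in> V\<close>] eps_pos by simp
    finally show ?thesis .
  qed
  then have "s' 1 \<in> U' 1" using mem_U'[OF one_in_K] \<open>s' 1 \<in> V\<close> by blast
  then show ?thesis using U'_first \<open>s' 1 \<in> V\<close> y'_new by auto
qed

text \<open>If s 1 lay in B, then x would be at least as close to s j as to s 1 for every other cell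
  U j containing y; but x lies in U 1 only.\<close>
lemma s_first_in_A: "s 1 \<in> A"
proof (rule ccontr)
  assume "s 1 \<notin> A"
  obtain j where j: "j \<in> K" "j \<noteq> 1" "y \<in> U j" using yU unfolding W_set_def by blast
  have "g j y \<le> g 1 y" using mem_U[OF j(1)] j(3) one_in_K by simp
  have "x \<notin> U j" using W_notin_other[OF j(1,2) xW] .
  then have "\<not> (\<forall>m\<in>K. g j x \<le> g m x)" using mem_U[OF j(1)] x_in_V by simp
  then obtain n where n: "n \<in> K" "g n x < g j x" by (auto simp: not_le)
  have "g 1 x \<le> g n x" using mem_U[OF one_in_K] x_in_U1 n(1) by simp
  have "g 1 x = g 1 y + lam {x, y}"
    using dist_edge_far[OF edge_xy s_in_V[OF one_in_K] \<open>s 1 \<notin> A\<close>] .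
  moreover have "g j x \<le> g j y + d y x" using dist_triangle s_in_V[OF j(1)] y_in_V x_in_V by blast
  moreover have "d y x \<le> lam {x, y}" using dist_edge[of y x] edge_xy by (simp add: insert_commute)
  ultimately show False using \<open>g j y \<le> g 1 y\<close> \<open>g 1 x \<le> g n x\<close> n(2) by linarith
qed

definition min_h :: "'a \<Rightarrow> real" where
  "min_h v = Min ((\<lambda>m. h m v) ` K)"

lemma min_h_le: "m \<in> K \<Longrightarrow> min_h v \<le> h m v"
  unfolding min_h_def by (rule Min_le) auto

lemma min_h_attained: "\<exists>j\<in>K. h j v = min_h v"
proof -
  have "min_h v \<in> (\<lambda>m. h m v) ` K" unfolding min_h_def by (rule Min_in) (use one_in_K in auto)
  then show ?thesis by auto
qed

lemma mem_U'_iff: "i \<in> K \<Longrightarrow> w \<in> insert y' V \<Longrightarrow> w \<in> U' i \<longleftrightarrow> h i w = min_h w"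
proof -
  assume i: "i \<in> K" and w: "w \<in> insert y' V"
  show ?thesis
  proof
    assume "w \<in> U' i"
    then have "\<forall>m\<in>K. h i w \<le> h m w" using mem_U'[OF i] by simp
    moreover obtain j where "j \<in> K" "h j w = min_h w" using min_h_attained by blast
    ultimately show "h i w = min_h w" using min_h_le[OF i, of w] by force
  next
    assume "h i w = min_h w"
    then show "w \<in> U' i" using mem_U'[OF i] w min_h_le by simp
  qed
qed

lemma f_first_y_lt_h_y': "m \<in> K \<Longrightarrow> m \<noteq> 1 \<Longrightarrow> f 1 y < h m y'"
proof -
  assume m: "m \<in> K" "m \<noteq> 1"
  have "y' \<in> U' 1" using U'_first by simp
  then have "h 1 y' = min_h y'" using mem_U'_iff[OF one_in_K] by simp
  moreover have "y' \<notin> U' m" using U'_other[OF m(2)] U_subset_V[OF m(1)] y'_new by blast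
  then have "h m y' \<noteq> min_h y'" using mem_U'_iff[OF m(1)] by simp
  ultimately show ?thesis using min_h_le[OF m(1), of y'] h_new_vertex[OF one_in_K] s'_first_in_A by simp
qed

lemma f_first_lt_at_far_vertex:
  assumes "v \<in> B" "m \<in> K" "m \<noteq> 1" "s' m \<in> A"
  shows "f 1 v < f m v"
proof -
  have "f 1 y < f m y" using f_first_y_lt_h_y'[OF assms(2,3)] h_new_vertex[OF assms(2)] assms(4) by simp
  then show ?thesis
    using dist_across_via_y[OF s'_first_in_A] dist_across_via_y[OF assms(4)] assms(1) by simp
qed

lemma minimizer_at_far_vertex:
  assumes v: "v \<in> B" and j: "j \<in> K" "h j v = min_h v"
  shows "j \<noteq> 1" "s' j \<notin> A" "v \<in> U j" "f j v = min_h v"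
proof -
  have "v \<in> insert y' V" using v by blast
  have "v \<notin> U' 1" using U'_first v y'_new by auto
  then show "j \<noteq> 1" using j mem_U'_iff[OF one_in_K \<open>v \<in> insert y' V\<close>] by auto
  show "s' j \<notin> A"
  proof
    assume "s' j \<in> A"
    then have "h 1 v < h j v"
      using f_first_lt_at_far_vertex[OF v j(1) \<open>j \<noteq> 1\<close>] h_vertex[OF one_in_K] h_vertex[OF j(1)]
        s'_first_in_A v by simp
    then show False using min_h_le[OF one_in_K, of v] j(2) by simp
  qed
  show "v \<in> U j" using mem_U'_iff[OF j(1) \<open>v \<in> insert y' V\<close>] j(2) U'_other[OF \<open>j \<noteq> 1\<close>] by simp
  show "f j v = min_h v" using h_vertex[OF j(1)] \<open>s' j \<notin> A\<close> v j(2) by simp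
qed

text \<open>Here the resolution bound enters: at y, which lies in U 1 and in the cell U j of the
  T'-nearest site, the distances to s' 1 and to s' j differ by at most eps, hence not at all.\<close>
lemma f_first_y_eq_min_h: "f 1 y = min_h y"
proof -
  have "y \<in> B" using y_in_V y_notin_A by blast
  obtain j where j: "j \<in> K" "h j y = min_h y" using min_h_attained by blast
  note jprops = minimizer_at_far_vertex[OF \<open>y \<in> B\<close> j]
  have "f 1 y < f j y + eps"
    using f_first_y_lt_h_y'[OF j(1) jprops(1)] h_new_vertex[OF j(1)] jprops(2) by simp
  moreover have "f j y \<le> f 1 y + eps"
    using min_h_le[OF one_in_K, of y] jprops(4) h_vertex[OF one_in_K y_in_V] s'_first_in_A y_notin_A
    by simp
  ultimately have "f 1 y = f j y"
    using dist_eq_if_gap_le_eps[OF one_in_K j(1) y_in_U1 jprops(3) s'_in_S[OF one_in_K] s'_in_S[OF j(1)]]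
    by simp
  then show ?thesis using jprops(4) by simp
qed

lemma f_first_lt_at_near_vertex:
  assumes v: "v \<in> A" and m: "m \<in> K" "s' m \<notin> A"
  shows "f 1 v < f m v"
proof -
  have "v \<in> V" using v A_subset_V by blast
  have "f 1 y \<le> f m y"
    using f_first_y_eq_min_h min_h_le[OF m(1), of y] h_vertex[OF m(1) y_in_V] m(2) y_notin_A by simp
  have "f m v = d v x + lam {x, y} + f m y"
    using dist_across_edge[OF edge_xy v s'_in_V[OF m(1)] m(2)] dist_T_sym[of E lam v "s' m"]
      dist_T_sym[of E lam y "s' m"] by simp
  moreover have "f 1 y = d (s' 1) x + lam {x, y}" using dist_edge_near[OF edge_xy s'_first_in_A] .
  moreover have "f 1 v \<le> d (s' 1) x + d x v" using dist_triangle s'_in_V one_in_K x_in_V \<open>v \<in> V\<close> by blast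
  ultimately show ?thesis using \<open>f 1 y \<le> f m y\<close> lam_pos[OF edge_xy] dist_T_sym[of E lam x v] by simp
qed

text \<open>By h_vertex, the sites on the other side of the edge than v are exactly those whose
  distance to v carries the extra eps in T'.\<close>
lemma f_first_lt_penalised:
  assumes "v \<in> V" "m \<in> K" "m \<noteq> 1" "\<not> (s' m \<in> A \<longleftrightarrow> v \<in> A)"
  shows "f 1 v < f m v"
proof (cases "v \<in> A")
  case True
  then show ?thesis using f_first_lt_at_near_vertex assms by simp
next
  case False
  then show ?thesis using f_first_lt_at_far_vertex assms by simp
qed

text \<open>Otherwise s' m, which lies in W m, would also belong to U 1.\<close>
lemma dist_first_gt_on_site_path:
  assumes m: "m \<in> K" "m \<noteq> 1" and r: "r \<in> V"
    and on_path: "g m r + d r (s' m) = g m (s' m)"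
  shows "g m r < g 1 r"
proof (rule ccontr)
  assume "\<not> g m r < g 1 r"
  have "g 1 (s' m) \<le> g 1 r + d r (s' m)"
    using dist_triangle s_in_V[OF one_in_K] r s'_in_V[OF m(1)] by blast
  also have "\<dots> \<le> g m (s' m)" using \<open>\<not> g m r < g 1 r\<close> on_path by simp
  finally have "g 1 (s' m) \<le> g m (s' m)" .
  moreover have "s' m \<in> U m" using s'_in_W[OF m(1)] W_subset_U by blast
  ultimately have "s' m \<in> U 1" using mem_U[OF m(1)] mem_U[OF one_in_K] by force
  then show False using W_notin_other[OF one_in_K m(2)[symmetric] s'_in_W[OF m(1)]] by blast
qed

lemma sites_same_side_of_edge:
  assumes pq: "{p, q} \<in> E" and m: "m \<in> K" "m \<noteq> 1"
    and p: "p \<in> U 1" "p \<in> U m" and g_first: "g 1 q = g 1 p + lam {p, q}"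
  shows "s m \<in> comp_without E q p \<longleftrightarrow> s' m \<in> comp_without E q p"
proof -
  let ?C = "comp_without E q p"
  have "p \<in> V" "q \<in> V" using edge_vertices[OF pq] by auto
  have "g 1 p \<le> g m p" "g m p \<le> g 1 p" using p mem_U m(1) one_in_K by auto
  have "s m \<in> V" "s' m \<in> V" using s_in_V s'_in_V m(1) by auto
  have "False" if "s m \<in> ?C" "s' m \<notin> ?C"
  proof -
    have "g m (s' m) = g m q + d q (s' m)"
      using dist_across_edge[OF pq that(1) \<open>s' m \<in> V\<close> that(2)] dist_edge_near[OF pq that(1)] by simp
    then have "g m q < g 1 q" using dist_first_gt_on_site_path[OF m \<open>q \<in> V\<close>] by simp
    moreover have "g m q = g m p + lam {p, q}" using dist_edge_near[OF pq that(1)] .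
    ultimately show False using g_first \<open>g m p \<le> g 1 p\<close> \<open>g 1 p \<le> g m p\<close> by simp
  qed
  moreover have "False" if "s' m \<in> ?C" "s m \<notin> ?C"
  proof -
    have "d (s' m) (s m) = d (s' m) p + lam {p, q} + d q (s m)"
      using dist_across_edge[OF pq that(1) \<open>s m \<in> V\<close> that(2)] .
    moreover have "d (s m) p = d (s m) q + lam {p, q}"
      using dist_edge_far[OF pq \<open>s m \<in> V\<close> that(2)] .
    ultimately have "g m p + d p (s' m) = g m (s' m)"
      using dist_T_sym[of E lam "s m" "s' m"] dist_T_sym[of E lam "s' m" p] dist_T_sym[of E lam q "s m"]
      by simp
    then have "g m p < g 1 p" using dist_first_gt_on_site_path[OF m \<open>p \<in> V\<close>] by simp
    then show False using \<open>g 1 p \<le> g m p\<close> by simp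
  qed
  ultimately show ?thesis by blast
qed

text \<open>On B the eps penalty of s' 1 is the only one that matters (f_first_lt_at_far_vertex); the
  invariant says that dropping it reproduces U 1.\<close>
definition first_cell_exact :: "'a \<Rightarrow> bool" where
  "first_cell_exact v \<longleftrightarrow> min_h v \<le> f 1 v \<and> (v \<in> U 1 \<longleftrightarrow> f 1 v = min_h v)"

lemma first_cell_exact_y: "first_cell_exact y"
  unfolding first_cell_exact_def using f_first_y_eq_min_h y_in_U1 by simp

lemma dist_first_sites_along_edge:
  assumes pq: "{p, q} \<in> E" "p \<in> B" "q \<in> B" and y: "y \<in> comp_without E q p"
  shows "f 1 q = f 1 p + lam {p, q}" "g 1 q = g 1 p + lam {p, q}"
  using dist_across_via_y[OF s'_first_in_A] dist_across_via_y[OF s_first_in_A]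
    dist_edge_near[OF pq(1) y] pq(2,3) by auto

lemma first_cell_exact_step_outside:
  assumes pq: "{p, q} \<in> E" "p \<in> B" "q \<in> B" and y: "y \<in> comp_without E q p"
    and p: "p \<notin> U 1" "first_cell_exact p"
  shows "first_cell_exact q"
proof -
  obtain m where m: "m \<in> K" "h m p = min_h p" using min_h_attained by blast
  note mprops = minimizer_at_far_vertex[OF pq(2) m]
  have "p \<in> V" "q \<in> V" using pq by auto
  have "min_h q \<le> f m q" using min_h_le[OF m(1), of q] h_vertex[OF m(1) \<open>q \<in> V\<close>] mprops(2) pq(3) by simp
  also have "\<dots> \<le> f m p + lam {p, q}"
    using dist_triangle[OF s'_in_V[OF m(1)] \<open>p \<in> V\<close> \<open>q \<in> V\<close>] dist_edge[OF pq(1)] by simp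
  also have "\<dots> < f 1 q"
    using p mprops(4) dist_first_sites_along_edge(1)[OF pq y] unfolding first_cell_exact_def by simp
  finally have "min_h q < f 1 q" .
  moreover have "q \<notin> U 1"
  proof
    assume "q \<in> U 1"
    have "g 1 p \<le> g n p" if "n \<in> K" for n
    proof -
      have "g 1 q \<le> g n q" using mem_U[OF one_in_K] \<open>q \<in> U 1\<close> that by simp
      moreover have "g n q \<le> g n p + lam {p, q}"
        using dist_triangle[OF s_in_V[OF that] \<open>p \<in> V\<close> \<open>q \<in> V\<close>] dist_edge[OF pq(1)] by simp
      ultimately show ?thesis using dist_first_sites_along_edge(2)[OF pq y] by simp
    qed
    then have "p \<in> U 1" using mem_U[OF one_in_K] \<open>p \<in> V\<close> by simp
    then show False using p(1) by simp
  qed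
  ultimately show ?thesis unfolding first_cell_exact_def by simp
qed

lemma first_cell_exact_step_inside:
  assumes pq: "{p, q} \<in> E" "p \<in> B" "q \<in> B" and y: "y \<in> comp_without E q p"
    and p: "p \<in> U 1" "first_cell_exact p"
  shows "first_cell_exact q"
proof -
  let ?C = "comp_without E q p" and ?l = "lam {p, q}"
  obtain m where m: "m \<in> K" "h m p = min_h p" using min_h_attained by blast
  note mprops = minimizer_at_far_vertex[OF pq(2) m]
  have "p \<in> V" "q \<in> V" using pq by auto
  have "?l > 0" using lam_pos[OF pq(1)] .
  have f_eq: "f m p = f 1 p" using p mprops(4) unfolding first_cell_exact_def by simp
  have g_eq: "g m p = g 1 p"
    using p(1) mprops(3) mem_U[OF one_in_K] mem_U[OF m(1)] m(1) one_in_K by force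
  have h_eq: "h m q = f m q" using h_vertex[OF m(1) \<open>q \<in> V\<close>] mprops(2) pq(3) by simp
  have same_side: "s m \<in> ?C \<longleftrightarrow> s' m \<in> ?C"
    using sites_same_side_of_edge[OF pq(1) m(1) mprops(1) p(1) mprops(3) dist_first_sites_along_edge(2)[OF pq y]] .
  show ?thesis
  proof (cases "s' m \<in> ?C")
    case True
    then have "f m q = f 1 q" "g m q = g 1 q"
      using same_side dist_edge_near[OF pq(1)] f_eq g_eq dist_first_sites_along_edge[OF pq y] by auto
    moreover have "q \<in> U 1 \<longleftrightarrow> q \<in> U m" using mem_U[OF one_in_K] mem_U[OF m(1)] \<open>g m q = g 1 q\<close> by simp
    moreover have "q \<in> U m \<longleftrightarrow> h m q = min_h q"
      using mem_U'_iff[OF m(1)] U'_other[OF mprops(1)] \<open>q \<in> V\<close> by simp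
    ultimately show ?thesis using min_h_le[OF m(1), of q] h_eq unfolding first_cell_exact_def by simp
  next
    case False
    then have "f m p = f m q + ?l" "g m p = g m q + ?l"
      using same_side dist_edge_far[OF pq(1)] s_in_V s'_in_V m(1) by auto
    then have "f m q < f 1 q" "g m q < g 1 q"
      using f_eq g_eq dist_first_sites_along_edge[OF pq y] \<open>?l > 0\<close> by auto
    moreover have "min_h q \<le> f m q" using min_h_le[OF m(1), of q] h_eq by simp
    moreover have "\<not> g 1 q \<le> g m q" using \<open>g m q < g 1 q\<close> by simp
    then have "q \<notin> U 1" using mem_U[OF one_in_K] m(1) by blast
    ultimately show ?thesis unfolding first_cell_exact_def by simp
  qed
qed

lemma first_cell_exact_far_side:
  assumes "v \<in> B"
  shows "first_cell_exact v"
proof -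
  have exit: "only_exit E B y x" using only_exit_complement[OF only_exit_comp_without[OF edge_xy]] .
  have "y \<in> B" using y_in_V y_notin_A by blast
  obtain xs where "walk E xs" "hd xs = y" "last xs = v" using connected y_in_V assms by blast
  then obtain ws where ws: "walk E ws" "distinct ws" "hd ws = y" "last ws = v"
    using walk_remove_cycles[OF lam_nonneg] by blast
  moreover have "set ws \<subseteq> B"
    using distinct_walk_stays_inside[OF exit \<open>y \<in> B\<close> ws(1,2)] ws(3,4) \<open>y \<in> B\<close> assms by simp
  ultimately show ?thesis
  proof (induction ws arbitrary: v rule: rev_induct)
    case (snoc q ws)
    show ?case
    proof (cases "ws = []")
      case True
      then show ?thesis using snoc.prems first_cell_exact_y by simp
    next
      case False
      let ?p = "last ws"
      have "walk E ws" "{?p, q} \<in> E" using walk_append_iff[OF False, of "[q]"] snoc.prems(1) by auto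
      moreover have "?p \<in> B" "q \<in> B" using snoc.prems(5) last_in_set[OF False] by auto
      moreover have "first_cell_exact ?p" using snoc.IH[OF \<open>walk E ws\<close>] snoc.prems False by simp
      moreover have "y \<in> comp_without E q ?p"
      proof -
        have "walk E (rev ws)" "hd (rev ws) = ?p" "last (rev ws) = y" "q \<notin> set (rev ws)"
          using \<open>walk E ws\<close> False snoc.prems by (auto simp: walk_rev hd_rev last_rev)
        then show ?thesis unfolding comp_without_def by blast
      qed
      ultimately have "first_cell_exact q"
        using first_cell_exact_step_inside first_cell_exact_step_outside by (cases "?p \<in> U 1") simp_all
      then show ?thesis using snoc.prems(4) by simp
    qed
  qed (simp add: walk_def)
qed

lemma first_cell_exact: "v \<in> V \<Longrightarrow> first_cell_exact v"
proof (cases "v \<in> A")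
  case True
  assume "v \<in> V"
  have "h 1 v = f 1 v" using h_vertex[OF one_in_K \<open>v \<in> V\<close>] s'_first_in_A True by simp
  moreover have "v \<in> U 1 \<longleftrightarrow> v \<in> U' 1" using U'_first True \<open>v \<in> V\<close> y'_new by auto
  ultimately show ?thesis
    using mem_U'_iff[OF one_in_K] min_h_le[OF one_in_K, of v] \<open>v \<in> V\<close>
    unfolding first_cell_exact_def by simp
qed (use first_cell_exact_far_side in blast)

lemma min_h_le_f:
  assumes v: "v \<in> V" and m: "m \<in> K"
  shows "min_h v \<le> f m v"
proof -
  have first: "min_h v \<le> f 1 v" using first_cell_exact[OF v] unfolding first_cell_exact_def by simp
  show ?thesis
  proof (cases "s' m \<in> A \<longleftrightarrow> v \<in> A")
    case True
    then show ?thesis using min_h_le[OF m, of v] h_vertex[OF m v] by simp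
  next
    case False
    then show ?thesis using first f_first_lt_penalised[OF v m] by (cases "m = 1") force+
  qed
qed

lemma mem_U_iff_f_eq_min_h: "v \<in> V \<Longrightarrow> i \<in> K \<Longrightarrow> v \<in> U i \<longleftrightarrow> f i v = min_h v"
proof -
  assume v: "v \<in> V" and i: "i \<in> K"
  show ?thesis
  proof (cases "i = 1 \<or> (s' i \<in> A \<longleftrightarrow> v \<in> A)")
    case True
    then consider "i = 1" | "i \<noteq> 1" "s' i \<in> A \<longleftrightarrow> v \<in> A" by blast
    then show ?thesis
    proof cases
      case 1
      then show ?thesis using first_cell_exact[OF v] unfolding first_cell_exact_def by simp
    next
      case 2
      then show ?thesis using mem_U'_iff[OF i] U'_other h_vertex[OF i v] v by simp
    qed
  next
    case False
    then have "f 1 v < f i v" "h i v = f i v + eps"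
      using f_first_lt_penalised[OF v i] h_vertex[OF i v] by auto
    moreover have "min_h v \<le> f 1 v" using first_cell_exact[OF v] unfolding first_cell_exact_def by simp
    ultimately show ?thesis
      using mem_U'_iff[OF i] U'_other False eps_pos v by auto
  qed
qed

lemma is_solution_s': "is_solution V E lam k U S s'"
  unfolding is_solution_def
proof
  fix i assume i: "i \<in> K"
  have "v \<in> U i \<longleftrightarrow> v \<in> cell V E lam (s' i) (s' ` K)" for v
  proof (cases "v \<in> V")
    case True
    obtain j where "j \<in> K" "v \<in> U j" using U_cover[OF True] by blast
    then have "f j v = min_h v" using mem_U_iff_f_eq_min_h True by blast
    then have "(\<forall>m\<in>K. f i v \<le> f m v) \<longleftrightarrow> f i v = min_h v"
      using min_h_le_f[OF True] i \<open>j \<in> K\<close> by force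
    then show ?thesis using mem_U_iff_f_eq_min_h[OF True i] True unfolding cell_def by auto
  qed (use U_subset_V[OF i] in \<open>auto simp: cell_def\<close>)
  then show "s' i \<in> S i \<and> U i = cell V E lam (s' i) (s' ` K)" using s'_in_S[OF i] by blast
qed

end

theorem lemma17:
  fixes V :: "'a set" and E :: "'a set set" and lam :: "'a set \<Rightarrow> real"
    and k :: nat and U S :: "nat \<Rightarrow> 'a set" and x y y' :: 'a and eps :: real
    and s' :: "nat \<Rightarrow> 'a"
  assumes inst: "gv_instance V E lam k U S"
    and k1: "1 \<le> k"
    and SW: "\<forall>i\<in>{1..k}. S i \<subseteq> W_set k U i"
    and xyE: "{x, y} \<in> E_set E k U 1"
    and xW: "x \<in> W_set k U 1"
    and yU: "y \<in> U 1 - W_set k U 1"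
    and eps_pos: "0 < eps"
    and eps_res: "ereal eps < res E lam k U S"
    and y'_new: "y' \<notin> V"
    and yes: "\<exists>s. is_solution V E lam k U S s"
    and sol': "is_solution (exp_V V y') (exp_E E x y y') (exp_lam lam x y y' eps) k
                 (exp_U V E U x y y') S s'"
  shows "is_solution V E lam k U S s'"
proof -
  obtain s where sol: "is_solution V E lam k U S s" using yes by blast
  interpret expanded_instance V E lam k U S x y y' eps s s'
    by (unfold_locales; fact assms sol)
  show ?thesis by (rule is_solution_s')
qed

end
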